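(* Let $d\ge1$, let $n$ be divisible by 4 and sufficiently large with $d=o(\sqrt{n})$. Let $\nu$ be the prefix of length $\frac{n}{4}$ of the infinite binary string $1^1 0^1 1^2 0^2 1^3 0^3\cdots$. Let $x$ be a binary string of length $\frac{n}{4}$ with exactly $d$ ones and $y$ a binary string of length $\frac{n}{4}$ with $\mathsf{HAM}(x,y)=d+1$, and set $s(x,y)=\nu^R\, x\, y^R\, \nu$. Then every substring of $s(x,y)$ that is a $d$-near-palindrome has length at most $200d^2+\frac{n}{2}$.
   Context: $1^k$ and $0^k$ denote $k$ repetitions of the symbol; juxtaposition denotes concatenation; $T^R$ denotes the reverse of $T$. $\mathsf{HAM}(x,y)$ is the number of positions where equal-length strings differ. A string $T$ of length $m$ is a $d$-near-palindrome if $|\{i\in[m]: T[i]\neq T[m+1-i]\}|\le d$. *)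

theory Defs
  imports Complex_Main "HOL-Library.Landau_Symbols" "HOL-Library.Sublist"
begin

(* Binary strings are lists of bool; True = 1, False = 0. Positions are 0-indexed. *)

definition HAM :: "bool list \<Rightarrow> bool list \<Rightarrow> nat" where
  "HAM x y = card {i. i < length x \<and> x ! i \<noteq> y ! i}"

definition near_pal :: "nat \<Rightarrow> bool list \<Rightarrow> bool" where
  "near_pal d T \<longleftrightarrow> card {i. i < length T \<and> T ! i \<noteq> T ! (length T - 1 - i)} \<le> d"

(* prefix of length m of the infinite string 1^1 0^1 1^2 0^2 1^3 0^3 ...;
   blocks 1..m have total length m(m+1) \<ge> m, so this is the true prefix *)
definition nu_prefix :: "nat \<Rightarrow> bool list" where
  "nu_prefix m = take m (concat (map (\<lambda>k. replicate k True @ replicate k False) [1..<m+1]))"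

definition s_str :: "nat \<Rightarrow> bool list \<Rightarrow> bool list \<Rightarrow> bool list" where
  "s_str n x y = rev (nu_prefix (n div 4)) @ x @ rev y @ nu_prefix (n div 4)"

end

theory Submission
  imports Defs
begin

text \<open>
  Write \<open>m = n/4\<close>, so \<open>s = \<nu>\<^sup>R w \<nu>\<close> with a middle part \<open>w = x y\<^sup>R\<close> of length \<open>2m\<close>
  containing at most \<open>3d+1\<close> ones. A window \<open>T\<close> longer than \<open>2m\<close> reaches into both copies
  of \<open>\<nu>\<close>. If it is centred at the centre of \<open>s\<close>, it compares \<open>x\<close> with \<open>y\<close> and sees
  \<open>HAM(x,y) = d+1\<close> mismatches. Otherwise, after reversing \<open>s\<close> if necessary, its centre lies
  \<open>t/2 > 0\<close> to the right, and the right copy of \<open>\<nu>\<close> is compared either with the middle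
  part (if \<open>t \<ge> (4d+2)\<^sup>2\<close>: of the first \<open>4d+2\<close> ones of \<open>\<nu>\<close>, at most \<open>3d+1\<close> can be
  matched) or with itself shifted by \<open>t\<close>. In the latter case, for each \<open>k \<in> [6d, 9d]\<close> the
  zero block \<open>[k\<^sup>2, k\<^sup>2+k)\<close> of \<open>\<nu>\<close> is shifted onto a window of length \<open>k\<close> below \<open>k\<^sup>2\<close>, which
  contains a one. The length bound \<open>2m + 200d\<^sup>2\<close> keeps all these positions inside \<open>T\<close>.
\<close>

text \<open>Bit \<open>j\<close> of \<open>1\<^sup>1 0\<^sup>1 1\<^sup>2 0\<^sup>2 \<dots>\<close>: block \<open>k\<close> has its ones at \<open>[k\<^sup>2-k, k\<^sup>2)\<close> and its zeros at \<open>[k\<^sup>2, k\<^sup>2+k)\<close>.\<close>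

definition nu_bit :: "nat \<Rightarrow> bool" where
  "nu_bit j \<longleftrightarrow> (\<exists>k. k*k - k \<le> j \<and> j < k*k)"

lemma nu_bitI: "k*k - k \<le> j \<Longrightarrow> j < k*k \<Longrightarrow> nu_bit j"
  by (auto simp: nu_bit_def)

lemma nu_bit_square_minus_one: "1 \<le> k \<Longrightarrow> nu_bit (k*k - 1)"
  by (rule nu_bitI[of k]) auto

lemma square_gap: "(k1::nat) < k2 \<Longrightarrow> k1*k1 + k1 < k2*k2"
proof -
  assume "k1 < k2"
  then have "Suc k1 * Suc k1 \<le> k2 * k2" by (intro mult_le_mono) auto
  then show ?thesis by simp
qed

lemma not_nu_bit_zero_block:
  assumes "k*k \<le> j" "j < k*k + k"
  shows "\<not> nu_bit j"
proof
  assume "nu_bit j"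
  then obtain k' where k': "k'*k' - k' \<le> j" "j < k'*k'" by (auto simp: nu_bit_def)
  show False
  proof (cases "k' \<le> k")
    case True
    then have "k'*k' \<le> k*k" by (simp add: mult_le_mono)
    then show False using assms k' by linarith
  next
    case False
    then have "Suc k * k \<le> k' * (k' - 1)" by (intro mult_le_mono) auto
    also have "\<dots> = k'*k' - k'" by (simp add: diff_mult_distrib2)
    finally show False using assms k' by simp
  qed
qed

definition nu_blocks :: "nat \<Rightarrow> bool list" where
  "nu_blocks N = concat (map (\<lambda>k. replicate k True @ replicate k False) [1..<N+1])"

lemma nu_blocks_Suc:
  "nu_blocks (Suc N) = nu_blocks N @ replicate (Suc N) True @ replicate (Suc N) False"
  by (simp add: nu_blocks_def)

lemma length_nu_blocks: "length (nu_blocks N) = N * (N+1)"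
  by (induction N) (simp_all add: nu_blocks_Suc, simp add: nu_blocks_def)

lemma nth_nu_blocks: "j < N*(N+1) \<Longrightarrow> nu_blocks N ! j = nu_bit j"
proof (induction N)
  case 0
  then show ?case by simp
next
  case (Suc N)
  consider "j < N*(N+1)" | "N*(N+1) \<le> j" "j < Suc N * Suc N" | "Suc N * Suc N \<le> j"
    by linarith
  then show ?case
  proof cases
    case 1
    then show ?thesis using Suc by (simp add: nu_blocks_Suc nth_append length_nu_blocks)
  next
    case 2
    then have "nu_bit j" by (intro nu_bitI[of "Suc N"]) (auto simp: algebra_simps)
    with 2 show ?thesis
      by (simp add: nu_blocks_Suc nth_append length_nu_blocks del: replicate_Suc)
  next
    case 3
    then have "\<not> nu_bit j" using Suc.prems by (intro not_nu_bit_zero_block[of "Suc N"]) auto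
    with 3 Suc.prems show ?thesis
      by (simp add: nu_blocks_Suc nth_append length_nu_blocks algebra_simps del: replicate_Suc)
  qed
qed

lemma nu_prefix_eq_take_nu_blocks: "nu_prefix m = take m (nu_blocks m)"
  by (simp add: nu_prefix_def nu_blocks_def)

lemma length_nu_prefix [simp]: "length (nu_prefix m) = m"
  by (simp add: nu_prefix_eq_take_nu_blocks length_nu_blocks)

lemma nth_nu_prefix: "j < m \<Longrightarrow> nu_prefix m ! j = nu_bit j"
  by (simp add: nu_prefix_eq_take_nu_blocks nth_nu_blocks less_le_trans[of j m "m*(m+1)"])

lemma exists_block_containing: "\<exists>k. k*k - k \<le> (j::nat) \<and> j < k*k + k"
proof -
  define k where "k = (LEAST k. j < k*k + k)"
  have upper: "j < k*k + k"
    unfolding k_def by (rule LeastI[of _ "j+1"]) simp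
  then obtain k0 where k0: "k = Suc k0" by (cases k) auto
  have "\<not> j < k0*k0 + k0" using k0 not_less_Least[of k0 "\<lambda>k. j < k*k + k"] by (simp add: k_def)
  then have "k*k - k \<le> j" using k0 by (simp add: algebra_simps)
  with upper show ?thesis by blast
qed

text \<open>A window without ones lies inside one zero block, and the zero blocks below \<open>k\<^sup>2\<close> are
  shorter than \<open>k\<close>.\<close>

lemma nu_bit_in_window:
  assumes "1 \<le> k" "w < k*k"
  shows "\<exists>i. w \<le> i \<and> i < w + k \<and> nu_bit i"
proof (cases "k*k < w + k")
  case True
  then show ?thesis using assms nu_bit_square_minus_one[of k] by (intro exI[of _ "k*k - 1"]) auto
next
  case False
  define i where "i = w + k - 1"
  obtain k' where k': "k'*k' - k' \<le> i" "i < k'*k' + k'" using exists_block_containing by blast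
  show ?thesis
  proof (cases "nu_bit i")
    case True
    then show ?thesis using assms by (intro exI[of _ i]) (auto simp: i_def)
  next
    case False
    then have "k'*k' \<le> i" using k' nu_bitI[of k' i] by linarith
    have "k' < k"
    proof (rule ccontr)
      assume "\<not> k' < k"
      then have "k*k \<le> k'*k'" by (simp add: mult_le_mono)
      then show False using \<open>k'*k' \<le> i\<close> \<open>\<not> k*k < w + k\<close> assms unfolding i_def by linarith
    qed
    then have "w < k'*k'" "1 \<le> k'" using k' \<open>k'*k' \<le> i\<close> assms unfolding i_def by auto
    then show ?thesis using \<open>k'*k' \<le> i\<close> nu_bit_square_minus_one[of k'] assms
      by (intro exI[of _ "k'*k' - 1"]) (auto simp: i_def)
  qed
qed

lemma nu_bit_shift_mismatch:
  assumes "1 \<le> k" "1 \<le> t" "t \<le> k*k"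
  shows "\<exists>j. k*k \<le> j \<and> j < k*k + k \<and> \<not> nu_bit j \<and> nu_bit (j - t)"
proof -
  obtain i where i: "k*k - t \<le> i" "i < k*k - t + k" "nu_bit i"
    using nu_bit_in_window[of k "k*k - t"] assms by auto
  have "k*k \<le> i + t" "i + t < k*k + k" using i assms by auto
  with i show ?thesis using not_nu_bit_zero_block by (intro exI[of _ "i + t"]) auto
qed

lemma card_le_card_of_hitting_square_blocks:
  assumes "finite (M :: nat set)" "\<And>k. k \<in> (K :: nat set) \<Longrightarrow> \<exists>j\<in>M. k*k \<le> j \<and> j < k*k + k"
  shows "card K \<le> card M"
proof -
  obtain g where g: "\<And>k. k \<in> K \<Longrightarrow> g k \<in> M \<and> k*k \<le> g k \<and> g k < k*k + k"
    using assms(2) by metis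
  have "inj_on g K"
  proof (rule inj_onI, rule ccontr)
    fix k1 k2 assume "k1 \<in> K" "k2 \<in> K" "g k1 = g k2" "k1 \<noteq> k2"
    then show False using g[of k1] g[of k2] square_gap[of k1 k2] square_gap[of k2 k1]
      by (cases "k1 < k2") auto
  qed
  then show ?thesis using card_inj_on_le[of g K M] g assms(1) by blast
qed

lemma card_nu_ones_below_square: "k \<le> card {j. j < k*k \<and> nu_bit j}"
proof -
  have "inj_on (\<lambda>i. i*i - 1) {1..k}"
  proof (rule inj_onI, rule ccontr)
    fix i i' assume "i \<in> {1..k}" "i' \<in> {1..k}" "i*i - 1 = i'*i' - 1" "i \<noteq> i'"
    then show False using square_gap[of i i'] square_gap[of i' i] by (cases "i < i'") auto
  qed
  moreover have "(\<lambda>i. i*i - 1) ` {1..k} \<subseteq> {j. j < k*k \<and> nu_bit j}"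
  proof
    fix j assume "j \<in> (\<lambda>i. i*i - 1) ` {1..k}"
    then obtain i where i: "1 \<le> i" "i \<le> k" "j = i*i - 1" by auto
    then have "0 < i*i" "i*i \<le> k*k" by (simp_all add: mult_le_mono)
    then have "j < k*k" using i(3) by linarith
    with i nu_bit_square_minus_one[of i] show "j \<in> {j. j < k*k \<and> nu_bit j}" by auto
  qed
  ultimately show ?thesis using card_inj_on_le[of _ "{1..k}"] by fastforce
qed

lemma card_nu_shift_mismatches:
  assumes "1 \<le> d" "1 \<le> t" "t \<le> 36*(d*d)"
  shows "3*d + 1 \<le> card {j. t \<le> j \<and> j < 90*(d*d) \<and> nu_bit j \<noteq> nu_bit (j - t)}"
proof -
  have "card {6*d..9*d} \<le> card {j. t \<le> j \<and> j < 90*(d*d) \<and> nu_bit j \<noteq> nu_bit (j - t)}"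
  proof (rule card_le_card_of_hitting_square_blocks)
    fix k assume "k \<in> {6*d..9*d}"
    then have k: "6*d \<le> k" "k \<le> 9*d" by auto
    have "36*(d*d) \<le> k*k" "k*k \<le> 81*(d*d)"
      using mult_le_mono[OF k(1) k(1)] mult_le_mono[OF k(2) k(2)] by auto
    moreover have "d \<le> d*d" using assms(1) by simp
    ultimately have bounds: "t \<le> k*k" "k*k + k \<le> 90*(d*d)" using k(2) assms(3) by linarith+
    then obtain j where "k*k \<le> j" "j < k*k + k" "\<not> nu_bit j" "nu_bit (j - t)"
      using nu_bit_shift_mismatch[of k t] k assms by auto
    with bounds show "\<exists>j\<in>{j. t \<le> j \<and> j < 90*(d*d) \<and> nu_bit j \<noteq> nu_bit (j - t)}.
        k*k \<le> j \<and> j < k*k + k" by (intro bexI[of _ j]) auto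
  qed simp
  then show ?thesis by simp
qed

lemma card_le_add_card_unmatched_reflection:
  fixes f :: "nat \<Rightarrow> bool"
  assumes "P \<subseteq> {..<t}" "t \<le> 2*m" "card {p. m \<le> p \<and> p < 3*m \<and> f p} \<le> c"
  shows "card P \<le> c + card {j \<in> P. \<not> f (m - 1 + t - j)}"
proof -
  let ?P1 = "{j \<in> P. f (m - 1 + t - j)}"
  have "finite P" using assms(1) finite_subset by blast
  have "(\<lambda>j. m - 1 + t - j) ` ?P1 \<subseteq> {p. m \<le> p \<and> p < 3*m \<and> f p}"
    using assms(1,2) by auto
  moreover have "inj_on (\<lambda>j. m - 1 + t - j) ?P1"
    using assms(1) by (intro inj_onI) auto
  ultimately have "card ?P1 \<le> c"
    using assms(3) card_inj_on_le[of _ ?P1 "{p. m \<le> p \<and> p < 3*m \<and> f p}"] by fastforce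
  moreover have "P = ?P1 \<union> {j \<in> P. \<not> f (m - 1 + t - j)}" by auto
  then have "card P \<le> card ?P1 + card {j \<in> P. \<not> f (m - 1 + t - j)}"
    by (metis card_Un_le)
  ultimately show ?thesis by linarith
qed

text \<open>For a window \<open>T\<close> occupying positions \<open>[a, e]\<close> of \<open>s\<close>, \<open>mismatches (nth s) a e\<close> is
  the set counted by \<open>near_pal\<close>, shifted by \<open>a\<close>.\<close>

definition mismatches :: "(nat \<Rightarrow> bool) \<Rightarrow> nat \<Rightarrow> nat \<Rightarrow> nat set" where
  "mismatches f a e = {q. a \<le> q \<and> q \<le> e \<and> f q \<noteq> f (a + e - q)}"

lemma finite_mismatches [simp]: "finite (mismatches f a e)"
  by (rule finite_subset[of _ "{..e}"]) (auto simp: mismatches_def)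

lemma mismatches_right_of_centre:
  fixes f :: "nat \<Rightarrow> bool"
  assumes left: "\<And>p. p < m \<Longrightarrow> f p = nu_bit (m - 1 - p)"
    and right: "\<And>j. j < m \<Longrightarrow> f (3*m + j) = nu_bit j"
    and middle: "card {p. m \<le> p \<and> p < 3*m \<and> f p} \<le> 3*d + 1"
    and "1 \<le> d" "e < 4*m" "a + 2*m + 200*(d*d) \<le> e"
    and right_of_centre: "4*m \<le> a + e"
  shows "d + 1 \<le> card (mismatches f a e)"
proof -
  \<comment> \<open>the mirror image of position \<open>3m + j\<close> is \<open>m - 1 + t - j\<close>\<close>
  define t where "t = a + e + 1 - 4*m"
  have t: "1 \<le> t" "t \<le> 2*m" "3*m + 100*(d*d) \<le> e"
    using assms unfolding t_def by linarith+
  have "(4*d + 2)*(4*d + 2) = 16*(d*d) + 16*d + 4" by (simp add: algebra_simps)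
  moreover have "d \<le> d*d" using \<open>1 \<le> d\<close> by simp
  ultimately have square_bound: "(4*d + 2)*(4*d + 2) \<le> 36*(d*d)" using \<open>1 \<le> d\<close> by linarith
  define J where "J = {j. 3*m + j \<in> mismatches f a e}"
  have finite_J: "finite J"
    by (rule finite_subset[of _ "{..e}"]) (auto simp: J_def mismatches_def)
  have card_J: "card J \<le> card (mismatches f a e)"
    by (rule card_inj_on_le[of "\<lambda>j. 3*m + j"]) (auto simp: J_def)
  have J_intro: "j \<in> J" if "j < 100*(d*d)" "nu_bit j \<noteq> f (m - 1 + t - j)" for j
  proof -
    have "j < m" "a + e - (3*m + j) = m - 1 + t - j"
      using that t \<open>e < 4*m\<close> right_of_centre unfolding t_def by linarith+
    with that t right_of_centre show ?thesis by (auto simp: J_def mismatches_def right)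
  qed
  have "d + 1 \<le> card J"
  proof (cases "(4*d + 2)*(4*d + 2) \<le> t")
    case True
    define P where "P = {j. j < (4*d + 2)*(4*d + 2) \<and> nu_bit j}"
    have "4*d + 2 \<le> card P" unfolding P_def by (rule card_nu_ones_below_square)
    moreover have "card P \<le> 3*d + 1 + card {j \<in> P. \<not> f (m - 1 + t - j)}"
      using True t middle by (intro card_le_add_card_unmatched_reflection) (auto simp: P_def)
    moreover have "card {j \<in> P. \<not> f (m - 1 + t - j)} \<le> card J"
      using square_bound by (intro card_mono finite_J) (auto simp: P_def intro: J_intro)
    ultimately show ?thesis by linarith
  next
    case False
    have "{j. t \<le> j \<and> j < 90*(d*d) \<and> nu_bit j \<noteq> nu_bit (j - t)} \<subseteq> J"
    proof
      fix j assume j: "j \<in> {j. t \<le> j \<and> j < 90*(d*d) \<and> nu_bit j \<noteq> nu_bit (j - t)}"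
      then have "m - 1 + t - j = m - 1 - (j - t)" "j - t < m" using t \<open>e < 4*m\<close> by auto
      then show "j \<in> J" using j left by (intro J_intro) auto
    qed
    then have "card {j. t \<le> j \<and> j < 90*(d*d) \<and> nu_bit j \<noteq> nu_bit (j - t)} \<le> card J"
      by (intro card_mono finite_J)
    moreover have "3*d + 1 \<le> card {j. t \<le> j \<and> j < 90*(d*d) \<and> nu_bit j \<noteq> nu_bit (j - t)}"
      using False square_bound t \<open>1 \<le> d\<close> by (intro card_nu_shift_mismatches) auto
    ultimately show ?thesis by linarith
  qed
  with card_J show ?thesis by linarith
qed

lemma count_list_True_eq_card: "count_list xs True = card {i. i < length xs \<and> xs ! i}"
  by (simp add: count_list_eq_length_filter length_filter_conv_card)

lemma count_list_True_le_add_HAM: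
  assumes "length x = length y"
  shows "count_list y True \<le> count_list x True + HAM x y"
proof -
  have "{i. i < length y \<and> y ! i} \<subseteq> {i. i < length x \<and> x ! i} \<union> {i. i < length x \<and> x ! i \<noteq> y ! i}"
    using assms by auto
  then have "card {i. i < length y \<and> y ! i}
      \<le> card ({i. i < length x \<and> x ! i} \<union> {i. i < length x \<and> x ! i \<noteq> y ! i})"
    by (intro card_mono) auto
  also have "\<dots> \<le> card {i. i < length x \<and> x ! i} + card {i. i < length x \<and> x ! i \<noteq> y ! i}"
    by (rule card_Un_le)
  finally show ?thesis by (simp add: count_list_True_eq_card HAM_def)
qed

lemma near_pal_rev:
  assumes "near_pal d T"
  shows "near_pal d (rev T)"
proof -
  let ?I = "{i. i < length T \<and> T ! i \<noteq> T ! (length T - 1 - i)}"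
  have "{i. i < length T \<and> rev T ! i \<noteq> rev T ! (length T - 1 - i)} \<subseteq> (\<lambda>i. length T - 1 - i) ` ?I"
  proof
    fix i assume i: "i \<in> {i. i < length T \<and> rev T ! i \<noteq> rev T ! (length T - 1 - i)}"
    then have "length T - 1 - i \<in> ?I" by (auto simp: rev_nth)
    moreover have "i = length T - 1 - (length T - 1 - i)" using i by auto
    ultimately show "i \<in> (\<lambda>i. length T - 1 - i) ` ?I" by blast
  qed
  then have "card {i. i < length T \<and> rev T ! i \<noteq> rev T ! (length T - 1 - i)} \<le> card ?I"
    by (rule surj_card_le[rotated]) simp
  with assms show ?thesis by (simp add: near_pal_def)
qed

lemma nth_infix: "i < length T \<Longrightarrow> (ps @ T @ ss) ! (length ps + i) = T ! i"
  by (simp add: nth_append)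

lemma card_mismatches_le_of_near_pal:
  assumes "s = ps @ T @ ss" "near_pal d T"
  shows "card (mismatches (nth s) (length ps) (length ps + length T - 1)) \<le> d"
proof -
  let ?a = "length ps" and ?L = "length T"
  let ?I = "{i. i < ?L \<and> T ! i \<noteq> T ! (?L - 1 - i)}"
  have "mismatches (nth s) ?a (?a + ?L - 1) \<subseteq> (\<lambda>i. ?a + i) ` ?I"
  proof
    fix q assume q: "q \<in> mismatches (nth s) ?a (?a + ?L - 1)"
    then have range: "?a \<le> q" "q \<le> ?a + ?L - 1" "q \<noteq> ?a + (?a + ?L - 1) - q"
      by (auto simp: mismatches_def)
    then have i: "q - ?a < ?L" "?L - 1 - (q - ?a) < ?L"
      and mirror: "?a + (?L - 1 - (q - ?a)) = ?a + (?a + ?L - 1) - q"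
      by arith+
    have "s ! q = T ! (q - ?a)" using nth_infix[OF i(1), of ps ss] range(1) by (simp add: assms(1))
    moreover have "s ! (?a + (?a + ?L - 1) - q) = T ! (?L - 1 - (q - ?a))"
      using nth_infix[OF i(2), of ps ss] by (simp only: assms(1) mirror)
    ultimately have "q - ?a \<in> ?I" using q i by (auto simp: mismatches_def)
    with range show "q \<in> (\<lambda>i. ?a + i) ` ?I" by (intro image_eqI[of _ _ "q - ?a"]) auto
  qed
  then have "card (mismatches (nth s) ?a (?a + ?L - 1)) \<le> card ?I"
    by (rule surj_card_le[rotated]) simp
  with assms(2) show ?thesis by (simp add: near_pal_def)
qed

lemma HAM_le_of_near_pal_centred:
  assumes split: "rev u @ x @ rev y @ u = ps @ T @ ss"
    and "length ps = length ss" "length ps \<le> length u" "length x = length y" "near_pal d T"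
  shows "HAM x y \<le> d"
proof -
  let ?s = "rev u @ x @ rev y @ u" and ?a = "length ps" and ?L = "length T"
  let ?l = "length u" and ?k = "length x"
  let ?H = "{i. i < ?k \<and> x ! i \<noteq> y ! i}"
  have lengths: "2 * ?a + ?L = 2 * ?l + 2 * ?k"
    using arg_cong[OF split, of length] assms(2,4) by simp
  have "(\<lambda>i. ?l + i) ` ?H \<subseteq> mismatches (nth ?s) ?a (?a + ?L - 1)"
  proof
    fix q assume "q \<in> (\<lambda>i. ?l + i) ` ?H"
    then obtain i where i: "i < ?k" "x ! i \<noteq> y ! i" "q = ?l + i" by auto
    have "?a + (?a + ?L - 1) - q = length (rev u) + (length x + (?k - 1 - i))"
      using lengths i by simp
    moreover have "?k - 1 - i < length (rev y)" using i assms(4) by simp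
    then have "?s ! (length (rev u) + (length x + (?k - 1 - i))) = y ! i"
      using i assms(4) unfolding append.assoc nth_append_length_plus
      by (simp add: nth_append rev_nth)
    moreover have "?s ! q = x ! i" using i by (simp add: nth_append)
    ultimately show "q \<in> mismatches (nth ?s) ?a (?a + ?L - 1)"
      using i lengths assms(3) by (auto simp: mismatches_def)
  qed
  then have "card ?H \<le> card (mismatches (nth ?s) ?a (?a + ?L - 1))"
    by (intro card_inj_on_le[of "\<lambda>i. ?l + i"]) auto
  also have "\<dots> \<le> d" by (rule card_mismatches_le_of_near_pal[OF split assms(5)])
  finally show ?thesis by (simp add: HAM_def)
qed

lemma near_pal_right_of_centre_length_le:
  assumes "1 \<le> d" "length w = 2*m" "count_list w True \<le> 3*d + 1"
    and split: "rev (nu_prefix m) @ w @ nu_prefix m = ps @ T @ ss"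
    and "length ss < length ps" "near_pal d T"
  shows "length T \<le> 2*m + 200*(d*d)"
proof (rule ccontr)
  assume long: "\<not> length T \<le> 2*m + 200*(d*d)"
  let ?s = "rev (nu_prefix m) @ w @ nu_prefix m" and ?a = "length ps"
  define e where "e = ?a + length T - 1"
  have lengths: "?a + length T + length ss = 4*m"
    using arg_cong[OF split, of length] assms(2) by simp
  have left: "?s ! p = nu_bit (m - 1 - p)" if "p < m" for p
    using that by (simp add: nth_append rev_nth nth_nu_prefix)
  have right: "?s ! (3*m + j) = nu_bit j" if "j < m" for j
    using that assms(2) by (simp add: nth_append nth_nu_prefix)
  have "{p. m \<le> p \<and> p < 3*m \<and> ?s ! p} \<subseteq> (\<lambda>i. m + i) ` {i. i < length w \<and> w ! i}"
  proof
    fix p assume "p \<in> {p. m \<le> p \<and> p < 3*m \<and> ?s ! p}"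
    then have "p - m \<in> {i. i < length w \<and> w ! i}" "p = m + (p - m)"
      using assms(2) by (auto simp: nth_append)
    then show "p \<in> (\<lambda>i. m + i) ` {i. i < length w \<and> w ! i}" by blast
  qed
  then have "card {p. m \<le> p \<and> p < 3*m \<and> ?s ! p} \<le> count_list w True"
    unfolding count_list_True_eq_card by (rule surj_card_le[rotated]) simp
  then have "d + 1 \<le> card (mismatches (nth ?s) ?a e)"
    using lengths long assms(1,3,5) left right unfolding e_def
    by (intro mismatches_right_of_centre[of m "nth ?s" d]) auto
  moreover have "card (mismatches (nth ?s) ?a e) \<le> d"
    unfolding e_def by (rule card_mismatches_le_of_near_pal[OF split assms(6)])
  ultimately show False by linarith
qed

lemma near_pal_sublist_length_le:
  assumes "1 \<le> d" "length x = m" "length y = m"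
    and "count_list x True = d" "HAM x y = d + 1"
    and "sublist T (rev (nu_prefix m) @ x @ rev y @ nu_prefix m)" "near_pal d T"
  shows "length T \<le> 2*m + 200*(d*d)"
proof -
  obtain ps ss where split: "rev (nu_prefix m) @ x @ rev y @ nu_prefix m = ps @ T @ ss"
    using assms(6) by (auto simp: sublist_def)
  have "count_list y True \<le> 2*d + 1"
    using count_list_True_le_add_HAM[of x y] assms(2-5) by simp
  then have ones: "count_list (x @ rev y) True \<le> 3*d + 1" "count_list (y @ rev x) True \<le> 3*d + 1"
    using assms(4) by (simp_all add: count_list_rev)
  consider "length ss < length ps" | "length ps < length ss" | "length ps = length ss"
    by linarith
  then show ?thesis
  proof cases
    case 1
    with split ones assms show ?thesis
      using near_pal_right_of_centre_length_le[of d "x @ rev y" m ps T ss] by simp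
  next
    case 2
    \<comment> \<open>reversal turns \<open>s(x,y)\<close> into \<open>s(y,x)\<close> and moves the window to the right of the centre\<close>
    have "rev (nu_prefix m) @ (y @ rev x) @ nu_prefix m = rev ss @ rev T @ rev ps"
      using arg_cong[OF split, of rev] by simp
    with 2 ones assms show ?thesis
      using near_pal_right_of_centre_length_le[of d "y @ rev x" m "rev ss" "rev T" "rev ps"]
      by (simp add: near_pal_rev)
  next
    case 3
    show ?thesis
    proof (rule ccontr)
      assume "\<not> ?thesis"
      moreover have "length ps + length T + length ss = 4*m"
        using arg_cong[OF split, of length] assms(2,3) by simp
      ultimately have "length ps \<le> length (nu_prefix m)" using 3 by simp
      then have "HAM x y \<le> d"
        using HAM_le_of_near_pal_centred[OF split 3] assms(2,3,7) by simp
      with assms(5) show False by simp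
    qed
  qed
qed

theorem lemma7p2:
  fixes d :: "nat \<Rightarrow> nat"
  assumes "\<forall>n. d n \<ge> 1"
    and "(\<lambda>n. real (d n)) \<in> o(\<lambda>n. sqrt (real n))"
  shows "\<forall>\<^sub>F n in sequentially. 4 dvd n \<longrightarrow>
           (\<forall>x y T. length x = n div 4 \<longrightarrow> length y = n div 4 \<longrightarrow>
              count_list x True = d n \<longrightarrow> HAM x y = d n + 1 \<longrightarrow>
              sublist T (s_str n x y) \<longrightarrow> near_pal (d n) T \<longrightarrow>
              length T \<le> 200 * (d n)^2 + n div 2)"
  \<comment> \<open>the bound holds for every \<open>n\<close> divisible by 4\<close>
proof (rule always_eventually, intro allI impI)
  fix n x y T
  assume "4 dvd n" "length x = n div 4" "length y = n div 4" "count_list x True = d n"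
    "HAM x y = d n + 1" "sublist T (s_str n x y)" "near_pal (d n) T"
  moreover have "n div 2 = 2 * (n div 4)" using \<open>4 dvd n\<close> by auto
  ultimately show "length T \<le> 200 * (d n)^2 + n div 2"
    using near_pal_sublist_length_le[of "d n" x "n div 4" y T] assms(1)
    by (simp add: s_str_def power2_eq_square)
qed

end
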